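(* Let $M$ be a matroid of rank $r$ on a finite ground set $E$ with set of bases $\mathcal{B}(M)$, and let $(E_1,E_2)$ be a good partition of $E$ with associated integers $r_1,r_2,a_1,a_2$ (as defined in the context). Define $$\mathcal{B}_1=\{B\in\mathcal{B}(M): |B\cap E_1|\le r_1-a_1\},\qquad \mathcal{B}_2=\{B\in\mathcal{B}(M): |B\cap E_2|\le r_2-a_2\}.$$ Then $\mathcal{B}_1$ and $\mathcal{B}_2$ are each the collection of bases of a matroid on $E$.
   Context: For $A\subseteq E$, $M|_A$ denotes the restriction of $M$ to $A$, whose independent sets are the independent sets of $M$ contained in $A$; $\mathcal{I}(N)$ denotes the family of independent sets of a matroid $N$. A partition $(E_1,E_2)$ of $E$ (so $E=E_1\cup E_2$, $E_1\cap E_2=\emptyset$) with $r_i$ the rank of $M|_{E_i}$ and $r_i>1$ for $i=1,2$ is called a good partition if there exist integers $a_1,a_2$ with $0<a_1<r_1$ and $0<a_2<r_2$ such that (P1) $r_1+r_2=r+a_1+a_2$, and (P2) for every $X\in\mathcal{I}(M|_{E_1})$ with $|X|\le r_1-a_1$ and every $Y\in\mathcal{I}(M|_{E_2})$ with $|Y|\le r_2-a_2$, one has $X\cup Y\in\mathcal{I}(M)$. *)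

theory Defs
  imports Main
begin

definition matroid :: "'a set \<Rightarrow> ('a set \<Rightarrow> bool) \<Rightarrow> bool" where
  "matroid E indep \<longleftrightarrow>
     finite E \<and>
     (\<forall>X. indep X \<longrightarrow> X \<subseteq> E) \<and>
     indep {} \<and>
     (\<forall>X Y. indep X \<and> Y \<subseteq> X \<longrightarrow> indep Y) \<and>
     (\<forall>X Y. indep X \<and> indep Y \<and> card X < card Y \<longrightarrow> (\<exists>y\<in>Y - X. indep (insert y X)))"

definition bases :: "'a set \<Rightarrow> ('a set \<Rightarrow> bool) \<Rightarrow> 'a set set" where
  "bases E indep = {B. B \<subseteq> E \<and> indep B \<and> (\<forall>X. indep X \<and> B \<subseteq> X \<longrightarrow> X = B)}"

definition restr :: "('a set \<Rightarrow> bool) \<Rightarrow> 'a set \<Rightarrow> 'a set \<Rightarrow> bool" where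
  "restr indep A X \<longleftrightarrow> indep X \<and> X \<subseteq> A"

definition rank_of :: "('a set \<Rightarrow> bool) \<Rightarrow> 'a set \<Rightarrow> nat" where
  "rank_of indep A = Max (card ` {X. restr indep A X})"

definition good_partition ::
  "'a set \<Rightarrow> ('a set \<Rightarrow> bool) \<Rightarrow> 'a set \<Rightarrow> 'a set \<Rightarrow> nat \<Rightarrow> nat \<Rightarrow> bool" where
  "good_partition E indep E1 E2 a1 a2 \<longleftrightarrow>
     E1 \<union> E2 = E \<and> E1 \<inter> E2 = {} \<and>
     rank_of indep E1 > 1 \<and> rank_of indep E2 > 1 \<and>
     0 < a1 \<and> a1 < rank_of indep E1 \<and> 0 < a2 \<and> a2 < rank_of indep E2 \<and>
     rank_of indep E1 + rank_of indep E2 = rank_of indep E + a1 + a2 \<and>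
     (\<forall>X Y. restr indep E1 X \<and> card X \<le> rank_of indep E1 - a1 \<and>
            restr indep E2 Y \<and> card Y \<le> rank_of indep E2 - a2 \<longrightarrow> indep (X \<union> Y))"

end

theory Submission
  imports Defs
begin

(* Write k1 = r1 - a1 and k2 = r2 - a2, so that k1 + k2 = r by (P1).
   The candidate matroid for B_1 is the "capped" matroid whose independent sets are the
   independent sets X of M with |X \<inter> E1| \<le> k1.  Downward closure is clear; for the
   augmentation property, if X is not yet saturated on E1 the augmentation of M works,
   and if |X \<inter> E1| = k1 then (P2) lets us add to X any element of E2 that augments
   X \<inter> E2 inside M|E2.  The capped matroid contains an independent set of size r
   (a k1-subset of a basis of M|E1 together with a k2-subset of a basis of M|E2,
   independent by (P2)), so its bases are exactly the bases of M satisfying the cap. *)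

lemma matroid_indep_subset:
  assumes "matroid E indep" "indep X"
  shows "X \<subseteq> E" and "finite X"
proof -
  show "X \<subseteq> E" using assms unfolding matroid_def by blast
  moreover have "finite E" using assms(1) unfolding matroid_def by blast
  ultimately show "finite X" by (rule finite_subset)
qed

lemma matroid_indep_downward:
  assumes "matroid E indep" "indep X" "Y \<subseteq> X"
  shows "indep Y"
  using assms unfolding matroid_def by meson

lemma matroid_augment:
  assumes "matroid E indep" "indep X" "indep Y" "card X < card Y"
  obtains y where "y \<in> Y - X" "indep (insert y X)"
  using assms unfolding matroid_def by meson

lemma finite_restr:
  assumes "matroid E indep"
  shows "finite {X. restr indep A X}"
proof -
  have "{X. restr indep A X} \<subseteq> Pow E"
    using matroid_indep_subset(1)[OF assms] by (auto simp: restr_def)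
  moreover have "finite E" using assms by (simp add: matroid_def)
  ultimately show ?thesis by (meson finite_Pow_iff rev_finite_subset)
qed

lemma card_le_rank_of:
  assumes "matroid E indep" "indep X" "X \<subseteq> A"
  shows "card X \<le> rank_of indep A"
  unfolding rank_of_def
proof (rule Max_ge)
  show "finite (card ` {X. restr indep A X})" using finite_restr[OF assms(1)] by simp
  show "card X \<in> card ` {X. restr indep A X}" using assms(2,3) by (auto simp: restr_def)
qed

lemma rank_of_attained:
  assumes "matroid E indep"
  obtains X where "indep X" "X \<subseteq> A" "card X = rank_of indep A"
proof -
  have "{X. restr indep A X} \<noteq> {}"
    using assms by (auto simp: matroid_def restr_def)
  then have "rank_of indep A \<in> card ` {X. restr indep A X}"
    unfolding rank_of_def using finite_restr[OF assms] by (intro Max_in) auto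
  then obtain X where "restr indep A X" "card X = rank_of indep A" by auto
  then show ?thesis using that unfolding restr_def by blast
qed

lemma indep_subset_of_card:
  assumes "matroid E indep" "k \<le> rank_of indep A"
  obtains Z where "restr indep A Z" "card Z = k"
proof -
  obtain X where X: "indep X" "X \<subseteq> A" "card X = rank_of indep A"
    using rank_of_attained[OF assms(1)] .
  obtain Z where Z: "Z \<subseteq> X" "card Z = k"
    using obtain_subset_with_card_n assms(2) X(3) by metis
  have "restr indep A Z"
    using Z(1) X(2) matroid_indep_downward[OF assms(1) X(1) Z(1)] by (auto simp: restr_def)
  then show ?thesis using that Z(2) by blast
qed

lemma card_split:
  assumes "finite X" "X \<subseteq> E1 \<union> E2" "E1 \<inter> E2 = {}"
  shows "card X = card (X \<inter> E1) + card (X \<inter> E2)"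
proof -
  have "X = (X \<inter> E1) \<union> (X \<inter> E2)" using assms(2) by blast
  then show ?thesis
    using card_Un_disjoint[of "X \<inter> E1" "X \<inter> E2"] assms(1,3) by auto
qed

text \<open>This reduces the theorem to exhibiting the right submatroid.\<close>
lemma bases_of_full_rank_submatroid:
  assumes M: "matroid E indep" and M': "matroid E indep'"
    and sub: "\<And>X. indep' X \<Longrightarrow> indep X"
    and Z: "indep' Z" "card Z = rank_of indep E"
  shows "bases E indep' = {B \<in> bases E indep. indep' B}"
proof (intro set_eqI iffI)
  fix B assume "B \<in> bases E indep'"
  then have B: "B \<subseteq> E" "indep' B" and max': "\<And>X. indep' X \<Longrightarrow> B \<subseteq> X \<Longrightarrow> X = B"
    unfolding bases_def by auto
  have cardB: "card B = rank_of indep E"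
  proof (rule ccontr)
    assume "card B \<noteq> rank_of indep E"
    then have "card B < card Z"
      using card_le_rank_of[OF M sub[OF B(2)] B(1)] Z(2) by linarith
    then obtain y where "y \<in> Z - B" "indep' (insert y B)"
      using matroid_augment[OF M' B(2) Z(1)] by blast
    then show False using max'[of "insert y B"] by auto
  qed
  have "X = B" if "indep X" "B \<subseteq> X" for X
  proof -
    have "card X \<le> card B"
      using card_le_rank_of[OF M that(1) matroid_indep_subset(1)[OF M that(1)]] cardB by simp
    then show ?thesis
      using card_seteq matroid_indep_subset(2)[OF M that(1)] that(2) by blast
  qed
  then show "B \<in> {B \<in> bases E indep. indep' B}"
    using B sub unfolding bases_def by auto
next
  fix B assume "B \<in> {B \<in> bases E indep. indep' B}"
  then show "B \<in> bases E indep'" using sub unfolding bases_def by auto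
qed

section \<open>The capped matroid\<close>

definition capped :: "('a set \<Rightarrow> bool) \<Rightarrow> 'a set \<Rightarrow> nat \<Rightarrow> 'a set \<Rightarrow> bool" where
  "capped indep A k X \<longleftrightarrow> indep X \<and> card (X \<inter> A) \<le> k"

text \<open>The hypotheses actually used: a partition of E, caps k1, k2 summing to the rank of M
  and attainable in the parts, and the union property (P2) for sets below the caps.\<close>
definition rank_split ::
  "'a set \<Rightarrow> ('a set \<Rightarrow> bool) \<Rightarrow> 'a set \<Rightarrow> 'a set \<Rightarrow> nat \<Rightarrow> nat \<Rightarrow> bool" where
  "rank_split E indep E1 E2 k1 k2 \<longleftrightarrow>
     E1 \<union> E2 = E \<and> E1 \<inter> E2 = {} \<and>
     k1 + k2 = rank_of indep E \<and> k1 \<le> rank_of indep E1 \<and> k2 \<le> rank_of indep E2 \<and>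
     (\<forall>X Y. restr indep E1 X \<and> card X \<le> k1 \<and> restr indep E2 Y \<and> card Y \<le> k2
            \<longrightarrow> indep (X \<union> Y))"

lemma rank_split_union:
  assumes "rank_split E indep E1 E2 k1 k2"
    and "restr indep E1 X" "card X \<le> k1" "restr indep E2 Y" "card Y \<le> k2"
  shows "indep (X \<union> Y)"
  using assms unfolding rank_split_def by blast

lemma rank_split_sym:
  assumes "rank_split E indep E1 E2 k1 k2"
  shows "rank_split E indep E2 E1 k2 k1"
proof -
  have "indep (Y \<union> X)" if "restr indep E2 Y \<and> card Y \<le> k2 \<and> restr indep E1 X \<and> card X \<le> k1"
    for X Y
    using rank_split_union[OF assms, of X Y] that by (simp add: sup_commute)
  then show ?thesis using assms unfolding rank_split_def by (simp add: add.commute inf_commute sup_commute)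
qed

lemma good_partition_rank_split:
  assumes "good_partition E indep E1 E2 a1 a2"
  shows "rank_split E indep E1 E2 (rank_of indep E1 - a1) (rank_of indep E2 - a2)"
  using assms unfolding good_partition_def rank_split_def by auto

lemma capped_downward:
  assumes "matroid E indep" "capped indep A k X" "Y \<subseteq> X"
  shows "capped indep A k Y"
proof -
  have "card (Y \<inter> A) \<le> card (X \<inter> A)"
    using assms matroid_indep_subset(2) unfolding capped_def by (meson Int_mono card_mono finite_Int order_refl)
  then show ?thesis
    using assms matroid_indep_downward unfolding capped_def by fastforce
qed

text \<open>Augmentation when X is below its cap: the augmentation of M adds at most one
  element of A.\<close>
lemma capped_augment_unsaturated:
  assumes M: "matroid E indep"
    and X: "capped indep A k X" "card (X \<inter> A) < k"
    and Y: "capped indep A k Y" and lt: "card X < card Y"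
  shows "\<exists>y\<in>Y - X. capped indep A k (insert y X)"
proof -
  obtain y where y: "y \<in> Y - X" "indep (insert y X)"
    using matroid_augment[OF M _ _ lt] X Y unfolding capped_def by blast
  have "finite X" using X M matroid_indep_subset(2) unfolding capped_def by blast
  then have "card (insert y X \<inter> A) \<le> card (X \<inter> A) + 1"
    by (cases "y \<in> A") (simp_all add: card_insert_if)
  then show ?thesis using y X(2) unfolding capped_def by auto
qed

text \<open>Augmentation when X is saturated on E1: X \<inter> E2 is below k2, so it can be
  augmented inside M|E2 from Y \<inter> E2, and (P2) makes the result independent together
  with X \<inter> E1.\<close>
lemma capped_augment_saturated:
  assumes M: "matroid E indep" and S: "rank_split E indep E1 E2 k1 k2"
    and X: "capped indep E1 k1 X" "card (X \<inter> E1) = k1"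
    and Y: "capped indep E1 k1 Y" and lt: "card X < card Y"
  shows "\<exists>y\<in>Y - X. capped indep E1 k1 (insert y X)"
proof -
  have part: "E1 \<union> E2 = E" "E1 \<inter> E2 = {}" and sum: "k1 + k2 = rank_of indep E"
    using S unfolding rank_split_def by auto
  have iX: "indep X" and iY: "indep Y" using X Y unfolding capped_def by auto
  have cX: "card X = card (X \<inter> E1) + card (X \<inter> E2)"
    and cY: "card Y = card (Y \<inter> E1) + card (Y \<inter> E2)"
    using card_split[OF matroid_indep_subset(2)[OF M iX]] card_split[OF matroid_indep_subset(2)[OF M iY]]
      matroid_indep_subset(1)[OF M] iX iY part by auto
  have "card (Y \<inter> E1) \<le> k1" using Y unfolding capped_def by simp
  then have "card (X \<inter> E2) < card (Y \<inter> E2)" using cX cY X(2) lt by linarith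
  then obtain y where y: "y \<in> Y \<inter> E2 - X \<inter> E2" "indep (insert y (X \<inter> E2))"
    using matroid_augment[OF M matroid_indep_downward[OF M iX] matroid_indep_downward[OF M iY]]
    by blast
  have "card Y \<le> k1 + k2"
    using card_le_rank_of[OF M iY matroid_indep_subset(1)[OF M iY]] sum by simp
  then have small2: "card (insert y (X \<inter> E2)) \<le> k2"
    using cX X(2) lt matroid_indep_subset(2)[OF M iX] by (simp add: card_insert_if)
  have part1: "restr indep E1 (X \<inter> E1)"
    using matroid_indep_downward[OF M iX] unfolding restr_def by auto
  have part2: "restr indep E2 (insert y (X \<inter> E2))" using y unfolding restr_def by auto
  have "indep ((X \<inter> E1) \<union> insert y (X \<inter> E2))"
    using rank_split_union[OF S part1 _ part2 small2] X(2) by simp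
  moreover have "(X \<inter> E1) \<union> insert y (X \<inter> E2) = insert y X"
    using matroid_indep_subset(1)[OF M iX] part y(1) by auto
  moreover have "insert y X \<inter> E1 = X \<inter> E1" using y(1) part(2) by auto
  ultimately show ?thesis using y(1) X(2) unfolding capped_def by auto
qed

lemma capped_matroid:
  assumes M: "matroid E indep" and S: "rank_split E indep E1 E2 k1 k2"
  shows "matroid E (capped indep E1 k1)"
  unfolding matroid_def
proof (intro conjI allI impI)
  show "finite E" using M by (simp add: matroid_def)
  show "capped indep E1 k1 {}" using M by (simp add: matroid_def capped_def)
  fix X Y
  show "capped indep E1 k1 X \<Longrightarrow> X \<subseteq> E"
    using matroid_indep_subset(1)[OF M] unfolding capped_def by blast
  show "capped indep E1 k1 X \<and> Y \<subseteq> X \<Longrightarrow> capped indep E1 k1 Y"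
    using capped_downward[OF M] by blast
  assume XY: "capped indep E1 k1 X \<and> capped indep E1 k1 Y \<and> card X < card Y"
  show "\<exists>y\<in>Y - X. capped indep E1 k1 (insert y X)"
  proof (cases "card (X \<inter> E1) < k1")
    case True
    then show ?thesis using capped_augment_unsaturated[OF M] XY by blast
  next
    case False
    then have "card (X \<inter> E1) = k1" using XY unfolding capped_def by simp
    then show ?thesis using capped_augment_saturated[OF M S] XY by blast
  qed
qed

lemma capped_full_rank:
  assumes M: "matroid E indep" and S: "rank_split E indep E1 E2 k1 k2"
  obtains Z where "capped indep E1 k1 Z" "card Z = rank_of indep E"
proof -
  have part: "E1 \<inter> E2 = {}" and sum: "k1 + k2 = rank_of indep E"
    using S unfolding rank_split_def by auto
  obtain Z1 where Z1: "restr indep E1 Z1" "card Z1 = k1"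
    using indep_subset_of_card[OF M] S unfolding rank_split_def by blast
  obtain Z2 where Z2: "restr indep E2 Z2" "card Z2 = k2"
    using indep_subset_of_card[OF M] S unfolding rank_split_def by blast
  have indep: "indep (Z1 \<union> Z2)" using rank_split_union[OF S] Z1 Z2 by simp
  have disj: "Z1 \<inter> Z2 = {}" and meet: "(Z1 \<union> Z2) \<inter> E1 = Z1"
    using Z1(1) Z2(1) part unfolding restr_def by auto
  have "card (Z1 \<union> Z2) = rank_of indep E"
    using card_Un_disjoint[OF _ _ disj] matroid_indep_subset(2)[OF M indep] Z1(2) Z2(2) sum
    by simp
  then show ?thesis by (intro that[of "Z1 \<union> Z2"]) (simp_all add: capped_def indep meet Z1(2))
qed

lemma capped_bases:
  assumes M: "matroid E indep" and S: "rank_split E indep E1 E2 k1 k2"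
  shows "\<exists>indep'. matroid E indep' \<and> bases E indep' = {B \<in> bases E indep. card (B \<inter> E1) \<le> k1}"
proof -
  obtain Z where "capped indep E1 k1 Z" "card Z = rank_of indep E"
    using capped_full_rank[OF M S] .
  then have "bases E (capped indep E1 k1) = {B \<in> bases E indep. capped indep E1 k1 B}"
    using bases_of_full_rank_submatroid[OF M capped_matroid[OF M S]] by (simp add: capped_def)
  then have "bases E (capped indep E1 k1) = {B \<in> bases E indep. card (B \<inter> E1) \<le> k1}"
    unfolding capped_def bases_def by auto
  then show ?thesis using capped_matroid[OF M S] by blast
qed

theorem lemma1:
  fixes E E1 E2 :: "'a set" and indep :: "'a set \<Rightarrow> bool" and a1 a2 :: nat
  assumes "matroid E indep"
    and "good_partition E indep E1 E2 a1 a2"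
  shows "(\<exists>indep1. matroid E indep1 \<and> bases E indep1 =
            {B \<in> bases E indep. card (B \<inter> E1) \<le> rank_of indep E1 - a1})
       \<and> (\<exists>indep2. matroid E indep2 \<and> bases E indep2 =
            {B \<in> bases E indep. card (B \<inter> E2) \<le> rank_of indep E2 - a2})"
proof -
  have S: "rank_split E indep E1 E2 (rank_of indep E1 - a1) (rank_of indep E2 - a2)"
    using good_partition_rank_split[OF assms(2)] .
  show ?thesis
    using capped_bases[OF assms(1) S] capped_bases[OF assms(1) rank_split_sym[OF S]] by blast
qed

end
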